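(* Let $k\ge 1$, $n\ge 2$ and $\mathbf C=(c_0,\dots,c_k)\in\{0,1\}^{k+1}$. Let $\mathbf H_n=(h_0,\dots,h_k)$ with $h_\beta=\binom{k}{\beta}\sum_{j=1}^{n-1}\frac{1}{j^\beta}$, and $\mathbf H_n\mathbf C^T=\sum_{\beta=0}^k h_\beta c_\beta$. For $1\le m\le n$ define $$O_{\mathbf C\max}(n,m+c_k-1)=\frac{(n-1)!^k}{(m-1)!}\,(\mathbf H_n\mathbf C^T)^{m-1}\prod_{i=1}^{n-m}F_{i+1}(\mathbf C').$$ Then $O_{\mathbf C\max}(n,m+c_k-1)\ge O_{\mathbf C}(n,m+c_k-1)$ for all $1\le m\le n$.
   Context: Fix integers $k\ge 1$, $n\ge 1$ and $\mathbf C=(c_0,c_1,\dots,c_k)\in\{0,1\}^{k+1}$; put $\mathbf C'=(1,\dots,1)-\mathbf C$. Consider $k$-tuples $(\pi_1,\dots,\pi_k)$ of permutations of $\{1,\dots,n\}$. A position $\alpha$ is a record of a permutation $\pi$ if $\pi(\alpha)<\pi(\alpha')$ for every $\alpha'<\alpha$ (position $1$ is always a record); equivalently records index the minimal elements of the points $(\alpha,\pi(\alpha))$ under strict componentwise domination. For a tuple, let $l_\alpha$ be the number of $\beta\in\{1,\dots,k\}$ for which $\alpha$ is a record of $\pi_\beta$ (so $l_1=k$). The $\mathbf C$ sequential optimization set of the tuple is $S=\{\alpha:c_{l_\alpha}=1\}$, with weight $|S|$. For an integer $m$, $O_{\mathbf C}(n,m)$ is the number of $k$-tuples whose weight equals $m$.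 For $j\ge 2$ and $X=(x_0,\dots,x_k)\in\mathbb R^{k+1}$, $F_j(X)=\sum_{\beta=0}^k\binom{k}{\beta}\frac{x_\beta}{(j-1)^\beta}$. Empty products equal $1$. *)

theory Defs
  imports Complex_Main "HOL-Combinatorics.Permutations"
begin

definition is_record :: "(nat \<Rightarrow> nat) \<Rightarrow> nat \<Rightarrow> bool" where
  "is_record p a \<longleftrightarrow> (\<forall>a'. 1 \<le> a' \<and> a' < a \<longrightarrow> p a < p a')"

definition perm_tuples :: "nat \<Rightarrow> nat \<Rightarrow> (nat \<Rightarrow> nat) list set" where
  "perm_tuples k n = {ps. length ps = k \<and> (\<forall>p\<in>set ps. p permutes {1..n})}"

definition rec_count :: "(nat \<Rightarrow> nat) list \<Rightarrow> nat \<Rightarrow> nat" where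
  "rec_count ps a = length (filter (\<lambda>p. is_record p a) ps)"

definition seq_opt_set :: "(nat \<Rightarrow> nat) \<Rightarrow> nat \<Rightarrow> (nat \<Rightarrow> nat) list \<Rightarrow> nat set" where
  "seq_opt_set c n ps = {a \<in> {1..n}. c (rec_count ps a) = 1}"

definition O_C :: "nat \<Rightarrow> (nat \<Rightarrow> nat) \<Rightarrow> nat \<Rightarrow> nat \<Rightarrow> nat" where
  "O_C k c n m = card {ps \<in> perm_tuples k n. card (seq_opt_set c n ps) = m}"

definition F :: "nat \<Rightarrow> nat \<Rightarrow> (nat \<Rightarrow> real) \<Rightarrow> real" where
  "F k j X = (\<Sum>\<beta>\<le>k. real (k choose \<beta>) * X \<beta> / (real j - 1) ^ \<beta>)"

definition HC :: "nat \<Rightarrow> (nat \<Rightarrow> nat) \<Rightarrow> nat \<Rightarrow> real" where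
  "HC k c n = (\<Sum>\<beta>\<le>k. real (k choose \<beta>) * (\<Sum>j=1..n-1. 1 / real j ^ \<beta>) * real (c \<beta>))"

definition O_C_max :: "nat \<Rightarrow> (nat \<Rightarrow> nat) \<Rightarrow> nat \<Rightarrow> nat \<Rightarrow> real" where
  "O_C_max k c n m = fact (n - 1) ^ k / fact (m - 1) * HC k c n ^ (m - 1)
      * (\<Prod>i=1..n-m. F k (i + 1) (\<lambda>\<beta>. 1 - real (c \<beta>)))"

end

(*
  Peel off the last position of all k permutations at once. Position n + 1 is a record of a
  permutation exactly when it carries the least of its n + 1 values, so b of the k permutations
  have a record there in (k choose b) n^(k-b) ways, independently of what happens before. Hence
  the counts obey a linear recurrence; divided by (n-1)!^k it says that O_C(n, t + c_k) is the
  coefficient of x^t in the product over j = 1..n-1 of (alpha_j + beta_j x), where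
  alpha_j = F_(j+1)(C') decreases in j and beta_1 + ... + beta_(n-1) = H_n C^T. Such a
  coefficient is at most (sum of the beta_j)^t / t! times the product of the n-1-t largest alpha_j.
*)

theory Submission
  imports Defs
begin

lemma listset_Cons_image: "listset (A # As) = (\<lambda>(x, xs). x # xs) ` (A \<times> listset As)"
  by (auto simp: set_Cons_def)

lemma sum_listset_Cons:
  "(\<Sum>zs\<in>listset (A # As). h zs) = (\<Sum>x\<in>A. \<Sum>xs\<in>listset As. h (x # xs))"
proof -
  have "inj_on (\<lambda>(x, xs). x # xs) (A \<times> listset As)"
    by (auto simp: inj_on_def)
  then show ?thesis
    unfolding listset_Cons_image by (simp add: sum.reindex sum.cartesian_product split_def)
qed

lemma finite_listset: "\<forall>A\<in>set As. finite A \<Longrightarrow> finite (listset As)"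
  by (induction As) (auto simp: listset_Cons_image simp del: listset.simps(2))

lemma listset_iff: "xs \<in> listset As \<longleftrightarrow> list_all2 (\<in>) xs As"
proof (induction As arbitrary: xs)
  case Nil
  then show ?case by auto
next
  case (Cons A As)
  then show ?case by (cases xs) (auto simp: set_Cons_def)
qed

lemma listset_replicate: "listset (replicate k A) = {xs. length xs = k \<and> (\<forall>x\<in>set xs. x \<in> A)}"
  by (induction k) (auto simp: set_Cons_def length_Suc_conv)

section \<open>Arrangements and records\<close>

text \<open>Bijections from the positions \<open>{1..n}\<close> onto an arbitrary value set \<open>V\<close>: removing the
  last position leaves a bijection onto \<open>V\<close> minus one value, so the counting must be done for
  arbitrary \<open>V\<close>, not only for permutations of \<open>{1..n}\<close>.\<close>
definition arrangements :: "nat \<Rightarrow> nat set \<Rightarrow> (nat \<Rightarrow> nat) set" where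
  "arrangements n V = {p. bij_betw p {1..n} V \<and> (\<forall>x. x \<notin> {1..n} \<longrightarrow> p x = x)}"

lemma arrangements_0: "arrangements 0 {} = {id}"
  by (auto simp: arrangements_def bij_betw_def)

lemma arrangements_permutes: "arrangements n {1..n} = {p. p permutes {1..n}}"
  by (auto simp: arrangements_def permutes_imp_bij permutes_not_in intro: bij_imp_permutes)

lemma bij_betw_arrangements_Suc:
  "bij_betw (\<lambda>(v, p). p(Suc n := v)) (SIGMA v:V. arrangements n (V - {v})) (arrangements (Suc n) V)"
proof (rule bij_betw_byWitness[where f' = "\<lambda>p. (p (Suc n), p(Suc n := Suc n))"])
  show "\<forall>a\<in>SIGMA v:V. arrangements n (V - {v}). (\<lambda>p. (p (Suc n), p(Suc n := Suc n))) ((\<lambda>(v, p). p(Suc n := v)) a) = a"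
    by (auto simp: arrangements_def)
  show "\<forall>p\<in>arrangements (Suc n) V. (\<lambda>(v, p). p(Suc n := v)) (p (Suc n), p(Suc n := Suc n)) = p"
    by auto
  show "(\<lambda>(v, p). p(Suc n := v)) ` (SIGMA v:V. arrangements n (V - {v})) \<subseteq> arrangements (Suc n) V"
  proof safe
    fix v p
    assume v: "v \<in> V" and p: "p \<in> arrangements n (V - {v})"
    then have "bij_betw p {1..n} (V - {v})"
      by (simp add: arrangements_def)
    then have "bij_betw (p(Suc n := v)) {1..n} (V - {v})"
      by (rule bij_betw_cong[THEN iffD1, rotated]) auto
    then have "bij_betw (p(Suc n := v)) ({1..n} \<union> {Suc n}) ((V - {v}) \<union> {v})"
      using notIn_Un_bij_betw[of "Suc n" "{1..n}" "p(Suc n := v)" "V - {v}"] by simp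
    with v p show "p(Suc n := v) \<in> arrangements (Suc n) V"
      by (auto simp: arrangements_def atLeastAtMostSuc_conv insert_absorb)
  qed
  show "(\<lambda>p. (p (Suc n), p(Suc n := Suc n))) ` arrangements (Suc n) V \<subseteq> (SIGMA v:V. arrangements n (V - {v}))"
  proof safe
    fix p
    assume "p \<in> arrangements (Suc n) V"
    then have bij: "bij_betw p {1..Suc n} V" and id: "\<forall>x. x \<notin> {1..Suc n} \<longrightarrow> p x = x"
      by (auto simp: arrangements_def)
    then show last: "p (Suc n) \<in> V"
      using bij_betwE by fastforce
    have "bij_betw p ({1..Suc n} - {Suc n}) (V - {p (Suc n)})"
      by (rule bij_betw_DiffI[OF bij]) (use last in auto)
    moreover have "{1..Suc n} - {Suc n} = {1..n}"
      by auto
    ultimately have "bij_betw p {1..n} (V - {p (Suc n)})"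
      by simp
    then have "bij_betw (p(Suc n := Suc n)) {1..n} (V - {p (Suc n)})"
      by (rule bij_betw_cong[THEN iffD1, rotated]) auto
    with id show "p(Suc n := Suc n) \<in> arrangements n (V - {p (Suc n)})"
      by (auto simp: arrangements_def)
  qed
qed

lemma finite_arrangements: "finite V \<Longrightarrow> finite (arrangements n V)"
proof (induction n arbitrary: V)
  case 0
  have "arrangements 0 V \<subseteq> {id}"
    by (auto simp: arrangements_def)
  then show ?case
    by (rule finite_subset) simp
next
  case (Suc n)
  have "arrangements (Suc n) V = (\<lambda>(v, p). p(Suc n := v)) ` (SIGMA v:V. arrangements n (V - {v}))"
    using bij_betw_arrangements_Suc[of n V] by (simp add: bij_betw_def)
  moreover have "finite (SIGMA v:V. arrangements n (V - {v}))"
    using Suc by auto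
  ultimately show ?case
    by simp
qed

lemma sum_arrangements_Suc:
  assumes "finite V"
  shows "(\<Sum>p\<in>arrangements (Suc n) V. h p) = (\<Sum>v\<in>V. \<Sum>p\<in>arrangements n (V - {v}). h (p(Suc n := v)))"
  using sum.reindex_bij_betw[OF bij_betw_arrangements_Suc[of n V], of h] assms
  by (simp add: sum.Sigma finite_arrangements split_def)

lemma is_record_fun_upd_above: "a \<le> n \<Longrightarrow> is_record (p(Suc n := v)) a \<longleftrightarrow> is_record p a"
  by (auto simp: is_record_def)

lemma is_record_last_iff:
  assumes "finite V" "v \<in> V" "p \<in> arrangements n (V - {v})"
  shows "is_record (p(Suc n := v)) (Suc n) \<longleftrightarrow> v = Min V"
proof -
  have "is_record (p(Suc n := v)) (Suc n) \<longleftrightarrow> (\<forall>y\<in>p ` {1..n}. v < y)"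
    by (auto simp: is_record_def)
  also have "p ` {1..n} = V - {v}"
    using assms(3) by (simp add: arrangements_def bij_betw_def)
  also have "(\<forall>y\<in>V - {v}. v < y) \<longleftrightarrow> v = Min V"
    using assms(2) eq_Min_iff[OF assms(1), of v] by (auto simp: order.strict_iff_order)
  finally show ?thesis .
qed

section \<open>Counting tuples by weight\<close>

definition extend_last :: "nat \<Rightarrow> (nat \<Rightarrow> nat) list \<Rightarrow> nat list \<Rightarrow> (nat \<Rightarrow> nat) list" where
  "extend_last n ps vs = map2 (\<lambda>p v. p(Suc n := v)) ps vs"

lemma extend_last_Nil [simp]: "extend_last n [] [] = []"
  by (simp add: extend_last_def)

lemma extend_last_Cons [simp]: "extend_last n (p # ps) (v # vs) = p(Suc n := v) # extend_last n ps vs"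
  by (simp add: extend_last_def)

lemma sum_listset_arrangements_Suc:
  assumes "\<forall>V\<in>set Vs. finite V"
  shows "(\<Sum>ps\<in>listset (map (arrangements (Suc n)) Vs). h ps)
    = (\<Sum>vs\<in>listset Vs. \<Sum>ps\<in>listset (map2 (\<lambda>V v. arrangements n (V - {v})) Vs vs).
         h (extend_last n ps vs))"
  using assms
proof (induction Vs arbitrary: h)
  case Nil
  then show ?case by simp
next
  case (Cons V Vs)
  have "(\<Sum>ps\<in>listset (map (arrangements (Suc n)) (V # Vs)). h ps)
      = (\<Sum>p\<in>arrangements (Suc n) V. \<Sum>vs\<in>listset Vs.
           \<Sum>ps\<in>listset (map2 (\<lambda>V v. arrangements n (V - {v})) Vs vs). h (p # extend_last n ps vs))"
    using Cons by (simp add: sum_listset_Cons del: listset.simps(2))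
  also have "\<dots> = (\<Sum>v\<in>V. \<Sum>p\<in>arrangements n (V - {v}). \<Sum>vs\<in>listset Vs.
           \<Sum>ps\<in>listset (map2 (\<lambda>V v. arrangements n (V - {v})) Vs vs). h (p(Suc n := v) # extend_last n ps vs))"
    using Cons.prems by (simp add: sum_arrangements_Suc)
  also have "\<dots> = (\<Sum>v\<in>V. \<Sum>vs\<in>listset Vs. \<Sum>p\<in>arrangements n (V - {v}).
           \<Sum>ps\<in>listset (map2 (\<lambda>V v. arrangements n (V - {v})) Vs vs). h (p(Suc n := v) # extend_last n ps vs))"
    by (rule sum.cong[OF refl], rule sum.swap)
  also have "\<dots> = (\<Sum>vs\<in>listset (V # Vs). \<Sum>ps\<in>listset (map2 (\<lambda>V v. arrangements n (V - {v})) (V # Vs) vs).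
           h (extend_last n ps vs))"
    by (simp add: sum_listset_Cons del: listset.simps(2))
  finally show ?case .
qed

fun min_hits :: "nat set list \<Rightarrow> nat list \<Rightarrow> nat" where
  "min_hits (V # Vs) (v # vs) = of_bool (v = Min V) + min_hits Vs vs"
| "min_hits _ _ = 0"

lemma rec_count_extend_below:
  assumes "a \<le> n" "length ps = length vs"
  shows "rec_count (extend_last n ps vs) a = rec_count ps a"
  using assms(2)
  by (induction ps vs rule: list_induct2) (simp_all add: rec_count_def is_record_fun_upd_above[OF assms(1)])

lemma rec_count_extend_last:
  assumes "list_all2 (\<in>) vs Vs" "list_all2 (\<in>) ps (map2 (\<lambda>V v. arrangements n (V - {v})) Vs vs)"
    and "\<forall>V\<in>set Vs. finite V"
  shows "rec_count (extend_last n ps vs) (Suc n) = min_hits Vs vs"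
  using assms
proof (induction vs Vs arbitrary: ps rule: list_all2_induct)
  case Nil
  then show ?case by (simp add: rec_count_def)
next
  case (Cons v vs V Vs)
  then obtain p ps' where ps: "ps = p # ps'"
    by (cases ps) auto
  with Cons have "is_record (p(Suc n := v)) (Suc n) \<longleftrightarrow> v = Min V"
    by (intro is_record_last_iff) auto
  with Cons ps show ?case
    by (simp add: rec_count_def)
qed

lemma card_seq_opt_set_extend:
  assumes "list_all2 (\<in>) vs Vs" "list_all2 (\<in>) ps (map2 (\<lambda>V v. arrangements n (V - {v})) Vs vs)"
    and "\<forall>V\<in>set Vs. finite V"
  shows "card (seq_opt_set c (Suc n) (extend_last n ps vs))
    = card (seq_opt_set c n ps) + of_bool (c (min_hits Vs vs) = 1)"
proof -
  have "length ps = length vs"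
    using list_all2_lengthD[OF assms(1)] list_all2_lengthD[OF assms(2)] by simp
  then have "seq_opt_set c (Suc n) (extend_last n ps vs)
      = seq_opt_set c n ps \<union> (if c (min_hits Vs vs) = 1 then {Suc n} else {})"
    using rec_count_extend_below rec_count_extend_last[OF assms]
    by (auto simp: seq_opt_set_def le_Suc_eq)
  moreover have "Suc n \<notin> seq_opt_set c n ps"
    by (simp add: seq_opt_set_def)
  ultimately show ?thesis
    by (simp add: seq_opt_set_def)
qed

lemma sum_choose_Suc_split:
  fixes f :: "nat \<Rightarrow> nat"
  shows "(\<Sum>b\<le>Suc k. (Suc k choose b) * f b)
    = (\<Sum>b\<le>k. (k choose b) * f (Suc b)) + (\<Sum>b\<le>k. (k choose b) * f b)"
proof -
  have "(\<Sum>b\<le>Suc k. (Suc k choose b) * f b) = f 0 + (\<Sum>b\<le>k. (Suc k choose Suc b) * f (Suc b))"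
    by (subst sum.atMost_Suc_shift) simp
  also have "\<dots> = (\<Sum>b\<le>k. (k choose b) * f (Suc b)) + (f 0 + (\<Sum>b\<le>k. (k choose Suc b) * f (Suc b)))"
    by (simp add: sum.distrib algebra_simps)
  also have "f 0 + (\<Sum>b\<le>k. (k choose Suc b) * f (Suc b)) = (\<Sum>b\<le>Suc k. (k choose b) * f b)"
    by (subst sum.atMost_Suc_shift) simp
  also have "\<dots> = (\<Sum>b\<le>k. (k choose b) * f b)"
    by simp
  finally show ?thesis .
qed

lemma sum_listset_min_hits:
  assumes "\<forall>V\<in>set Vs. finite V \<and> card V = Suc n"
  shows "(\<Sum>vs\<in>listset Vs. G (min_hits Vs vs))
    = (\<Sum>b\<le>length Vs. (length Vs choose b) * n ^ (length Vs - b) * G b)"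
  using assms
proof (induction Vs arbitrary: G)
  case Nil
  then show ?case by simp
next
  case (Cons V Vs)
  let ?k = "length Vs"
  have V: "finite V" "card V = Suc n" "Min V \<in> V"
    using Cons.prems by (auto intro: Min_in)
  have "(\<Sum>vs\<in>listset (V # Vs). G (min_hits (V # Vs) vs))
      = (\<Sum>v\<in>V. \<Sum>vs\<in>listset Vs. G (of_bool (v = Min V) + min_hits Vs vs))"
    by (simp add: sum_listset_Cons del: listset.simps(2))
  also have "\<dots> = (\<Sum>vs\<in>listset Vs. G (Suc (min_hits Vs vs)))
      + (\<Sum>v\<in>V - {Min V}. \<Sum>vs\<in>listset Vs. G (min_hits Vs vs))"
    using V by (simp add: sum.remove)
  also have "\<dots> = (\<Sum>vs\<in>listset Vs. G (Suc (min_hits Vs vs))) + n * (\<Sum>vs\<in>listset Vs. G (min_hits Vs vs))"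
    using V by simp
  also have "\<dots> = (\<Sum>b\<le>?k. (?k choose b) * (n ^ (Suc ?k - Suc b) * G (Suc b)))
      + (\<Sum>b\<le>?k. (?k choose b) * (n ^ (Suc ?k - b) * G b))"
    using Cons by (simp add: sum_distrib_left Suc_diff_le algebra_simps)
  also have "\<dots> = (\<Sum>b\<le>Suc ?k. (Suc ?k choose b) * (n ^ (Suc ?k - b) * G b))"
    by (rule sum_choose_Suc_split[symmetric])
  finally show ?case
    by (simp add: algebra_simps)
qed

text \<open>Of the \<open>k\<close> permutations, exactly \<open>b\<close> have a record at the new last position in
  \<open>(k choose b) * n ^ (k - b)\<close> ways (see \<open>sum_listset_min_hits\<close>); the position then adds
  \<open>c b\<close> to the weight.\<close>
fun weight_count :: "nat \<Rightarrow> (nat \<Rightarrow> nat) \<Rightarrow> nat \<Rightarrow> nat \<Rightarrow> nat" where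
  "weight_count k c 0 m = of_bool (m = 0)"
| "weight_count k c (Suc n) m = (\<Sum>b\<le>k. (k choose b) * n ^ (k - b) *
      (if c b = 1 then (case m of 0 \<Rightarrow> 0 | Suc m' \<Rightarrow> weight_count k c n m') else weight_count k c n m))"

lemma card_map2_Diff:
  assumes "list_all2 (\<in>) vs Vs" "\<forall>V\<in>set Vs. finite V \<and> card V = Suc n"
  shows "\<forall>V\<in>set (map2 (\<lambda>V v. V - {v}) Vs vs). finite V \<and> card V = n"
  using assms by (induction vs Vs rule: list_all2_induct) auto

lemma listset_arrangements_0:
  assumes "\<forall>V\<in>set Vs. V = {}"
  shows "listset (map (arrangements 0) Vs) = {replicate (length Vs) id}"
proof -
  have "map (arrangements 0) Vs = replicate (length Vs) {id}"
    using assms by (induction Vs) (auto simp: arrangements_0)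
  moreover have "listset (replicate j {id}) = {replicate j id}" for j
    by (induction j) (auto simp: set_Cons_def)
  ultimately show ?thesis
    by simp
qed

lemma sum_listset_arrangements_weight:
  assumes "\<forall>V\<in>set Vs. finite V \<and> card V = n"
  shows "(\<Sum>ps\<in>listset (map (arrangements n) Vs). of_bool (card (seq_opt_set c n ps) = m))
    = weight_count (length Vs) c n m"
  using assms
proof (induction n arbitrary: Vs m)
  case 0
  then have "\<forall>V\<in>set Vs. V = {}"
    by auto
  then show ?case
    by (simp add: listset_arrangements_0 seq_opt_set_def)
next
  case (Suc n)
  let ?k = "length Vs"
  let ?G = "\<lambda>b. if c b = 1 then (case m of 0 \<Rightarrow> 0 | Suc m' \<Rightarrow> weight_count ?k c n m')
                else weight_count ?k c n m"
  have "(\<Sum>ps\<in>listset (map (arrangements (Suc n)) Vs). of_bool (card (seq_opt_set c (Suc n) ps) = m))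
     = (\<Sum>vs\<in>listset Vs. \<Sum>ps\<in>listset (map2 (\<lambda>V v. arrangements n (V - {v})) Vs vs).
          of_bool (card (seq_opt_set c (Suc n) (extend_last n ps vs)) = m))"
    using Suc.prems by (simp add: sum_listset_arrangements_Suc)
  also have "\<dots> = (\<Sum>vs\<in>listset Vs. ?G (min_hits Vs vs))"
  proof (rule sum.cong[OF refl])
    fix vs
    assume "vs \<in> listset Vs"
    then have vs: "list_all2 (\<in>) vs Vs"
      by (simp add: listset_iff)
    then have "length vs = length Vs"
      by (rule list_all2_lengthD)
    then have arrangements_eq: "map (arrangements n) (map2 (\<lambda>V v. V - {v}) Vs vs)
        = map2 (\<lambda>V v. arrangements n (V - {v})) Vs vs"
      and length_eq: "length (map2 (\<lambda>V v. V - {v}) Vs vs) = ?k"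
      by (induction vs Vs rule: list_induct2) auto
    have IH: "(\<Sum>ps\<in>listset (map2 (\<lambda>V v. arrangements n (V - {v})) Vs vs).
        of_bool (card (seq_opt_set c n ps) = m')) = weight_count ?k c n m'" for m'
      by (rule Suc.IH[OF card_map2_Diff[OF vs Suc.prems], unfolded arrangements_eq length_eq])
    have "(\<Sum>ps\<in>listset (map2 (\<lambda>V v. arrangements n (V - {v})) Vs vs).
          of_bool (card (seq_opt_set c (Suc n) (extend_last n ps vs)) = m))
        = (\<Sum>ps\<in>listset (map2 (\<lambda>V v. arrangements n (V - {v})) Vs vs).
          of_bool (card (seq_opt_set c n ps) + of_bool (c (min_hits Vs vs) = 1) = m))"
      using vs Suc.prems by (intro sum.cong refl) (simp add: card_seq_opt_set_extend listset_iff)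
    also have "\<dots> = ?G (min_hits Vs vs)"
      using IH by (cases m) auto
    finally show "(\<Sum>ps\<in>listset (map2 (\<lambda>V v. arrangements n (V - {v})) Vs vs).
          of_bool (card (seq_opt_set c (Suc n) (extend_last n ps vs)) = m)) = ?G (min_hits Vs vs)" .
  qed
  also have "\<dots> = weight_count ?k c (Suc n) m"
    using sum_listset_min_hits[OF Suc.prems, of ?G] by simp
  finally show ?case .
qed

lemma O_C_eq_weight_count: "O_C k c n m = weight_count k c n m"
proof -
  have tuples: "perm_tuples k n = listset (map (arrangements n) (replicate k {1..n}))"
    by (simp only: perm_tuples_def map_replicate listset_replicate arrangements_permutes mem_Collect_eq)
  then have "finite (perm_tuples k n)"
    by (simp add: finite_listset finite_arrangements)
  then have "O_C k c n m = (\<Sum>ps\<in>perm_tuples k n. of_bool (card (seq_opt_set c n ps) = m))"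
    by (simp add: O_C_def Int_def)
  also have "\<dots> = weight_count k c n m"
    unfolding tuples by (subst sum_listset_arrangements_weight) auto
  finally show ?thesis .
qed

section \<open>The normalised recurrence and its bound\<close>

lemma sum_choose_zero_power: "(\<Sum>b\<le>k. (k choose b) * 0 ^ (k - b) * x b) = (x k :: nat)"
proof -
  have "(\<Sum>b\<le>k. (k choose b) * 0 ^ (k - b) * x b) = (\<Sum>b\<le>k. if b = k then x b else 0)"
    by (rule sum.cong) auto
  then show ?thesis
    by simp
qed

lemma weight_count_one_position:
  assumes "c k \<in> {0, 1}"
  shows "weight_count k c (Suc 0) m = of_bool (m = c k)"
  using assms by (auto simp: sum_choose_zero_power split: nat.split)

lemma weight_count_Suc_zero_weight:
  assumes "c k = 1"
  shows "weight_count k c (Suc n) 0 = 0"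
  by (induction n) (simp_all add: assms sum_choose_zero_power)

definition off_weight :: "nat \<Rightarrow> (nat \<Rightarrow> nat) \<Rightarrow> nat \<Rightarrow> real" where
  "off_weight k c j = F k (j + 1) (\<lambda>\<beta>. 1 - real (c \<beta>))"

definition on_weight :: "nat \<Rightarrow> (nat \<Rightarrow> nat) \<Rightarrow> nat \<Rightarrow> real" where
  "on_weight k c j = (\<Sum>\<beta>\<le>k. real (k choose \<beta>) * real (c \<beta>) / real j ^ \<beta>)"

lemma HC_eq_sum_on_weight: "HC k c n = (\<Sum>j=1..n-1. on_weight k c j)"
  unfolding HC_def on_weight_def sum_distrib_left sum_distrib_right
  by (subst sum.swap) (simp add: algebra_simps)

lemma sum_choose_power_rescale:
  fixes x :: "nat \<Rightarrow> real"
  assumes "j > 0"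
  shows "(\<Sum>b\<le>k. real (k choose b) * real j ^ (k - b) * x b)
    = real j ^ k * (\<Sum>b\<le>k. real (k choose b) * x b / real j ^ b)"
  unfolding sum_distrib_left
  using assms by (intro sum.cong refl) (simp add: power_diff)

lemma weight_count_Suc_real:
  assumes "\<forall>b\<le>k. c b \<in> {0, 1}" "n > 0"
  shows "real (weight_count k c (Suc n) m) = real n ^ k *
    (off_weight k c n * weight_count k c n m
      + on_weight k c n * (case m of 0 \<Rightarrow> 0 | Suc m' \<Rightarrow> weight_count k c n m'))"
proof -
  let ?X = "real (weight_count k c n m)"
  let ?Y = "real (case m of 0 \<Rightarrow> 0 | Suc m' \<Rightarrow> weight_count k c n m')"
  have "real (weight_count k c (Suc n) m)
      = (\<Sum>b\<le>k. real (k choose b) * real n ^ (k - b) * ((1 - real (c b)) * ?X + real (c b) * ?Y))"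
    unfolding weight_count.simps of_nat_sum
    using assms(1) by (intro sum.cong refl) (auto split: nat.split)
  also have "\<dots> = real n ^ k * (\<Sum>b\<le>k. real (k choose b) * ((1 - real (c b)) * ?X + real (c b) * ?Y) / real n ^ b)"
    using assms(2) by (rule sum_choose_power_rescale)
  also have "(\<Sum>b\<le>k. real (k choose b) * ((1 - real (c b)) * ?X + real (c b) * ?Y) / real n ^ b)
      = (\<Sum>b\<le>k. real (k choose b) * (1 - real (c b)) / real n ^ b) * ?X
        + (\<Sum>b\<le>k. real (k choose b) * real (c b) / real n ^ b) * ?Y"
    unfolding sum_distrib_right sum.distrib[symmetric] by (intro sum.cong refl) (simp add: add_divide_distrib diff_divide_distrib algebra_simps)
  also have "\<dots> = off_weight k c n * ?X + on_weight k c n * ?Y"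
    by (simp add: off_weight_def on_weight_def F_def)
  finally show ?thesis
    by (simp split: nat.split)
qed

text \<open>\<open>scaled_count k c N t\<close> is the coefficient of \<open>x ^ t\<close> in
  \<open>\<Prod>j=1..N. off_weight k c j + on_weight k c j * x\<close>.\<close>
fun scaled_count :: "nat \<Rightarrow> (nat \<Rightarrow> nat) \<Rightarrow> nat \<Rightarrow> nat \<Rightarrow> real" where
  "scaled_count k c 0 t = of_bool (t = 0)"
| "scaled_count k c (Suc N) t = off_weight k c (Suc N) * scaled_count k c N t
    + on_weight k c (Suc N) * (case t of 0 \<Rightarrow> 0 | Suc t' \<Rightarrow> scaled_count k c N t')"

lemma weight_count_eq_scaled_count:
  assumes c01: "\<forall>b\<le>k. c b \<in> {0, 1}"
  shows "real (weight_count k c (Suc N) (t + c k)) = fact N ^ k * scaled_count k c N t"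
proof (induction N arbitrary: t)
  case 0
  show ?case
    using c01 by (simp add: weight_count_one_position del: weight_count.simps)
next
  case (Suc N)
  have shifted: "real (case t + c k of 0 \<Rightarrow> 0 | Suc m' \<Rightarrow> weight_count k c (Suc N) m')
      = fact N ^ k * (case t of 0 \<Rightarrow> 0 | Suc t' \<Rightarrow> scaled_count k c N t')"
  proof (cases t)
    case 0
    moreover have "c k = 0 \<or> c k = 1"
      using c01 by auto
    ultimately show ?thesis
      by (auto simp: weight_count_Suc_zero_weight simp del: weight_count.simps)
  next
    case (Suc t')
    then show ?thesis
      using Suc.IH[of t'] by simp
  qed
  have "real (weight_count k c (Suc (Suc N)) (t + c k)) = real (Suc N) ^ k *
      (off_weight k c (Suc N) * weight_count k c (Suc N) (t + c k)
        + on_weight k c (Suc N) * (case t + c k of 0 \<Rightarrow> 0 | Suc m' \<Rightarrow> weight_count k c (Suc N) m'))"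
    using c01 by (intro weight_count_Suc_real) auto
  also have "\<dots> = real (Suc N) ^ k * fact N ^ k * scaled_count k c (Suc N) t"
    by (simp only: Suc.IH shifted scaled_count.simps) (simp add: algebra_simps)
  also have "\<dots> = fact (Suc N) ^ k * scaled_count k c (Suc N) t"
    by (simp add: power_mult_distrib)
  finally show ?case .
qed

lemma power_add_ge_first_terms:
  fixes x y :: real
  assumes "x \<ge> 0" "y \<ge> 0"
  shows "x ^ Suc n + real (Suc n) * y * x ^ n \<le> (x + y) ^ Suc n"
proof (induction n)
  case 0
  then show ?case by simp
next
  case (Suc n)
  have "x ^ Suc (Suc n) + real (Suc (Suc n)) * y * x ^ Suc n
      \<le> (x + y) * (x ^ Suc n + real (Suc n) * y * x ^ n)"
    using assms by (simp add: algebra_simps)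
  also have "\<dots> \<le> (x + y) * (x + y) ^ Suc n"
    using Suc assms by (intro mult_left_mono) auto
  finally show ?case by simp
qed

lemma off_weight_nonneg: "\<forall>b\<le>k. c b \<in> {0, 1} \<Longrightarrow> off_weight k c j \<ge> 0"
  unfolding off_weight_def F_def by (intro sum_nonneg) auto

lemma on_weight_nonneg: "on_weight k c j \<ge> 0"
  unfolding on_weight_def by (intro sum_nonneg) auto

lemma off_weight_antimono:
  assumes "\<forall>b\<le>k. c b \<in> {0, 1}" "1 \<le> i" "i \<le> j"
  shows "off_weight k c j \<le> off_weight k c i"
  unfolding off_weight_def F_def
proof (rule sum_mono)
  fix b
  assume "b \<in> {..k}"
  then have "real (k choose b) * (1 - real (c b)) \<ge> 0"
    using assms(1) by auto
  moreover have "real i ^ b \<le> real j ^ b" "real i ^ b > 0" "real j ^ b > 0"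
    using assms(2,3) by (auto intro: power_mono)
  ultimately have "real (k choose b) * (1 - real (c b)) / real j ^ b
      \<le> real (k choose b) * (1 - real (c b)) / real i ^ b"
    by (intro divide_left_mono) auto
  then show "real (k choose b) * (1 - real (c b)) / (real (j + 1) - 1) ^ b
      \<le> real (k choose b) * (1 - real (c b)) / (real (i + 1) - 1) ^ b"
    by simp
qed

lemma scaled_count_eq_0: "N < t \<Longrightarrow> scaled_count k c N t = 0"
proof (induction N arbitrary: t)
  case 0
  then show ?case by simp
next
  case (Suc N)
  then show ?case by (cases t) auto
qed

lemma power_div_fact_Suc_step:
  fixes H b P :: real
  assumes "H \<ge> 0" "b \<ge> 0" "P \<ge> 0"
  shows "H ^ Suc s / fact (Suc s) * P + b * (H ^ s / fact s * P) \<le> (H + b) ^ Suc s / fact (Suc s) * P"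
proof -
  have "real (Suc s) * b * H ^ s / fact (Suc s) = real (Suc s) * (b * H ^ s) / (real (Suc s) * fact s)"
    by (simp only: fact_Suc mult.assoc)
  also have "\<dots> = b * H ^ s / fact s"
    by (rule mult_divide_mult_cancel_left) simp
  finally have "H ^ Suc s / fact (Suc s) * P + b * (H ^ s / fact s * P)
      = (H ^ Suc s + real (Suc s) * b * H ^ s) / fact (Suc s) * P"
    by (simp add: add_divide_distrib distrib_right)
  also have "\<dots> \<le> (H + b) ^ Suc s / fact (Suc s) * P"
    using power_add_ge_first_terms[OF assms(1,2), of s] assms(3)
    by (intro mult_right_mono divide_right_mono) auto
  finally show ?thesis .
qed

lemma off_weight_mult_prod_le:
  assumes "\<forall>b\<le>k. c b \<in> {0, 1}" "t \<le> N"
  shows "off_weight k c (Suc N) * (\<Prod>i=1..N-t. off_weight k c i) \<le> (\<Prod>i=1..Suc N-t. off_weight k c i)"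
proof -
  have "off_weight k c (Suc N) * (\<Prod>i=1..N-t. off_weight k c i)
      \<le> off_weight k c (Suc (N - t)) * (\<Prod>i=1..N-t. off_weight k c i)"
    using assms off_weight_antimono[OF assms(1), of "Suc (N - t)" "Suc N"] off_weight_nonneg[OF assms(1)]
    by (intro mult_right_mono prod_nonneg) auto
  also have "\<dots> = (\<Prod>i=1..Suc N-t. off_weight k c i)"
    using assms(2) by (simp add: Suc_diff_le)
  finally show ?thesis .
qed

lemma scaled_count_le:
  assumes c01: "\<forall>b\<le>k. c b \<in> {0, 1}"
  shows "scaled_count k c N t
    \<le> (\<Sum>j=1..N. on_weight k c j) ^ t / fact t * (\<Prod>i=1..N-t. off_weight k c i)"
proof (induction N arbitrary: t)
  case 0
  then show ?case by simp
next
  case (Suc N)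
  define H where "H = (\<Sum>j=1..N. on_weight k c j)"
  define P where "P s = (\<Prod>i=1..s. off_weight k c i)" for s
  let ?a = "off_weight k c (Suc N)" and ?b = "on_weight k c (Suc N)"
  have H: "H \<ge> 0" and P: "P s \<ge> 0" and a: "?a \<ge> 0" and b: "?b \<ge> 0" for s
    unfolding H_def P_def using off_weight_nonneg[OF c01]
    by (auto intro: sum_nonneg prod_nonneg on_weight_nonneg)
  have IH: "scaled_count k c N s \<le> H ^ s / fact s * P (N - s)" for s
    using Suc.IH unfolding H_def P_def .
  have a_IH: "?a * scaled_count k c N t \<le> H ^ t / fact t * P (Suc N - t)"
  proof (cases "t \<le> N")
    case True
    have "?a * scaled_count k c N t \<le> ?a * (H ^ t / fact t * P (N - t))"
      using IH a by (rule mult_left_mono)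
    also have "\<dots> = H ^ t / fact t * (?a * P (N - t))"
      by simp
    also have "\<dots> \<le> H ^ t / fact t * P (Suc N - t)"
      using off_weight_mult_prod_le[OF c01 True] H unfolding P_def by (intro mult_left_mono) auto
    finally show ?thesis .
  next
    case False
    then show ?thesis
      using H P by (simp add: scaled_count_eq_0)
  qed
  show ?case
  proof (cases t)
    case 0
    then show ?thesis
      using a_IH by (simp add: H_def P_def)
  next
    case (Suc s)
    have "scaled_count k c (Suc N) t = ?a * scaled_count k c N t + ?b * scaled_count k c N s"
      using Suc by simp
    also have "\<dots> \<le> H ^ Suc s / fact (Suc s) * P (N - s) + ?b * (H ^ s / fact s * P (N - s))"
      using add_mono[OF a_IH mult_left_mono[OF IH b]] Suc by simp
    also have "\<dots> \<le> (H + ?b) ^ Suc s / fact (Suc s) * P (N - s)"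
      using H b P by (rule power_div_fact_Suc_step)
    finally show ?thesis
      using Suc by (simp add: H_def P_def)
  qed
qed

theorem theorem5p1:
  fixes k n m :: nat and c :: "nat \<Rightarrow> nat"
  assumes "k \<ge> 1" and "n \<ge> 2"
    and "\<forall>\<beta>\<le>k. c \<beta> \<in> {0, 1}"
    and "1 \<le> m" and "m \<le> n"
  shows "O_C_max k c n m \<ge> real (O_C k c n (m + c k - 1))"
proof -
  obtain N where N: "n = Suc N"
    using assms(2) by (cases n) auto
  obtain t where t: "m = Suc t"
    using assms(4) by (cases m) auto
  have "real (O_C k c n (m + c k - 1)) = fact N ^ k * scaled_count k c N t"
    using weight_count_eq_scaled_count[OF assms(3)] by (simp add: O_C_eq_weight_count N t)
  also have "\<dots> \<le> fact N ^ k * ((\<Sum>j=1..N. on_weight k c j) ^ t / fact t * (\<Prod>i=1..N-t. off_weight k c i))"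
    using scaled_count_le[OF assms(3)] by (intro mult_left_mono) auto
  also have "\<dots> = O_C_max k c n m"
    by (simp add: O_C_max_def HC_eq_sum_on_weight off_weight_def N t)
  finally show ?thesis .
qed

end
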